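(* Let $R$ be a ring with unity and involution $*$, and let $a,b,c\in R$. The following statements are equivalent. (1) $a$ is left dual $(b,c)$-core invertible. (2) $b\in b(cab)^*R$. (3) $b\in Rcab\cap bb^*R$. (4) There exists some $x\in Rc$ such that $b(xab)^n=b$ and $((xab)^n)^*=(xab)^n$ for every positive integer $n$. (5) There exists some $x\in Rc$ such that $b(xab)^n=b$ and $((xab)^n)^*=(xab)^n$ for some positive integer $n$.
   Context: An element $a\in R$ is called left dual $(b,c)$-core invertible if there exists $x\in Rc$ such that $bxab=b$ and $(xab)^*=xab$; such an $x$ is called a left dual $(b,c)$-core inverse of $a$. *)

theory Defs
  imports Main
begin

class involution_ring = ring_1 +
  fixes invol :: "'a \<Rightarrow> 'a"  ("_\<^sup>\<star>" [1000] 999)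
  assumes invol_add: "(x + y)\<^sup>\<star> = x\<^sup>\<star> + y\<^sup>\<star>"
    and invol_mult: "(x * y)\<^sup>\<star> = y\<^sup>\<star> * x\<^sup>\<star>"
    and invol_invol: "(x\<^sup>\<star>)\<^sup>\<star> = x"

definition left_dual_bc_core_inverse :: "'a::involution_ring \<Rightarrow> 'a \<Rightarrow> 'a \<Rightarrow> 'a \<Rightarrow> bool" where
  "left_dual_bc_core_inverse a b c x \<longleftrightarrow>
     (\<exists>r. x = r * c) \<and> b * x * a * b = b \<and> (x * a * b)\<^sup>\<star> = x * a * b"

definition left_dual_bc_core_invertible :: "'a::involution_ring \<Rightarrow> 'a \<Rightarrow> 'a \<Rightarrow> bool" where
  "left_dual_bc_core_invertible a b c \<longleftrightarrow> (\<exists>x. left_dual_bc_core_inverse a b c x)"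

end

theory Submission
  imports Defs
begin

text \<open>If \<open>b = b b\<^sup>\<star> t\<close>, then \<open>p = t\<^sup>\<star> b\<close> is a Hermitian idempotent
  with \<open>b p = b\<close>; given also \<open>s c a b = b\<close>, the element \<open>x = t\<^sup>\<star> s c\<close>
  satisfies \<open>x a b = p\<close>, so every power of \<open>x a b\<close> is \<open>p\<close>. Conversely, for
  \<open>x \<in> R c\<close> every positive power \<open>e\<close> of \<open>x a b\<close> is a left multiple
  \<open>y c a b\<close>, so \<open>b = b e = b e\<^sup>\<star> = b (c a b)\<^sup>\<star> y\<^sup>\<star>\<close>; and from
  \<open>b = b (c a b)\<^sup>\<star> r\<close> one reads off \<open>b = b b\<^sup>\<star> t\<close> with
  \<open>t = a\<^sup>\<star> c\<^sup>\<star> r\<close>, whose projection \<open>t\<^sup>\<star> b = r\<^sup>\<star> c a b\<close> puts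
  \<open>b = b p\<close> into \<open>R c a b\<close>.\<close>

lemma power_idempotent:
  fixes e :: "'a::monoid_mult"
  assumes "e * e = e" and "n \<noteq> 0"
  shows "e ^ n = e"
  using assms(2)
proof (induction n)
  case (Suc m)
  then show ?case
    using assms(1) by (cases "m = 0") (simp_all add: power_Suc2)
qed simp

lemma invol_eq_if_mult_invol_eq:
  fixes p :: "'a::involution_ring"
  assumes "p * p\<^sup>\<star> = p"
  shows "p\<^sup>\<star> = p"
  by (metis assms invol_invol invol_mult)

lemma hermitian_idempotent_if_in_mult_invol_right_ideal:
  fixes b t :: "'a::involution_ring"
  assumes "b = b * b\<^sup>\<star> * t"
  defines "p \<equiv> t\<^sup>\<star> * b"
  shows "p\<^sup>\<star> = p" and "b * p = b" and "p * p = p"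
proof -
  have "p * p\<^sup>\<star> = t\<^sup>\<star> * (b * b\<^sup>\<star> * t)"
    unfolding p_def by (simp add: invol_mult invol_invol mult.assoc)
  also have "\<dots> = p"
    unfolding p_def by (simp flip: assms(1))
  finally show p_herm: "p\<^sup>\<star> = p"
    by (rule invol_eq_if_mult_invol_eq)
  have "b * p\<^sup>\<star> = b * b\<^sup>\<star> * t"
    unfolding p_def by (simp add: invol_mult invol_invol mult.assoc)
  then show b_p: "b * p = b"
    using p_herm by (simp flip: assms(1))
  have "p * p = t\<^sup>\<star> * (b * p)"
    unfolding p_def by (simp add: mult.assoc)
  with b_p show "p * p = p"
    unfolding p_def by simp
qed

lemma in_invol_right_ideal_if_hermitian_left_multiple:
  fixes b e d y :: "'a::involution_ring"
  assumes "b * e = b" and "e\<^sup>\<star> = e" and "e = y * d"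
  shows "b = b * d\<^sup>\<star> * y\<^sup>\<star>"
proof -
  have "b = b * e\<^sup>\<star>"
    using assms(1,2) by simp
  also have "e\<^sup>\<star> = d\<^sup>\<star> * y\<^sup>\<star>"
    using assms(3) by (simp add: invol_mult)
  also have "b * (d\<^sup>\<star> * y\<^sup>\<star>) = b * d\<^sup>\<star> * y\<^sup>\<star>"
    by (simp add: mult.assoc)
  finally show ?thesis .
qed

lemma in_invol_right_ideal_if_power_core_condition:
  fixes a b c r x :: "'a::involution_ring"
  assumes "x = r * c" and "n \<ge> 1"
    and "b * (x * a * b) ^ n = b" and "((x * a * b) ^ n)\<^sup>\<star> = (x * a * b) ^ n"
  shows "\<exists>r. b = b * (c * a * b)\<^sup>\<star> * r"
proof -
  have "(x * a * b) ^ n = (x * a * b) ^ (n - 1) * (x * a * b)"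
    using assms(2) power_minus_mult[of n "x * a * b"] by simp
  also have "\<dots> = ((x * a * b) ^ (n - 1) * r) * (c * a * b)"
    unfolding assms(1) by (simp add: mult.assoc)
  finally have "b = b * (c * a * b)\<^sup>\<star> * ((x * a * b) ^ (n - 1) * r)\<^sup>\<star>"
    by (rule in_invol_right_ideal_if_hermitian_left_multiple[OF assms(3,4)])
  then show ?thesis ..
qed

lemma in_left_ideal_and_mult_invol_right_ideal_if_in_invol_right_ideal:
  fixes a b c r :: "'a::involution_ring"
  assumes "b = b * (c * a * b)\<^sup>\<star> * r"
  shows "(\<exists>s. b = s * c * a * b) \<and> (\<exists>t. b = b * b\<^sup>\<star> * t)"
proof -
  define t where "t = a\<^sup>\<star> * c\<^sup>\<star> * r"
  note assms
  also have "b * (c * a * b)\<^sup>\<star> * r = b * b\<^sup>\<star> * t"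
    unfolding t_def by (simp add: invol_mult mult.assoc)
  finally have b_right_ideal: "b = b * b\<^sup>\<star> * t" .
  have "t\<^sup>\<star> * b = r\<^sup>\<star> * c * a * b"
    unfolding t_def by (simp add: invol_mult invol_invol mult.assoc)
  then have "b = b * (r\<^sup>\<star> * c * a * b)"
    using hermitian_idempotent_if_in_mult_invol_right_ideal(2)[OF b_right_ideal] by simp
  also have "\<dots> = (b * r\<^sup>\<star>) * c * a * b"
    by (simp add: mult.assoc)
  finally have "b = (b * r\<^sup>\<star>) * c * a * b" .
  then show ?thesis
    using b_right_ideal by blast
qed

lemma power_core_condition_if_in_left_ideal_and_mult_invol_right_ideal:
  fixes a b c s t :: "'a::involution_ring"
  assumes "b = s * c * a * b" and "b = b * b\<^sup>\<star> * t"
  shows "\<exists>x. (\<exists>r. x = r * c) \<and>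
    (\<forall>n::nat. n \<ge> 1 \<longrightarrow> b * (x * a * b) ^ n = b \<and> ((x * a * b) ^ n)\<^sup>\<star> = (x * a * b) ^ n)"
proof -
  define x where "x = t\<^sup>\<star> * s * c"
  have xab: "x * a * b = t\<^sup>\<star> * b"
    unfolding x_def using assms(1) by (metis mult.assoc)
  note p = hermitian_idempotent_if_in_mult_invol_right_ideal[OF assms(2)]
  have "(x * a * b) ^ n = t\<^sup>\<star> * b" if "n \<ge> 1" for n :: nat
    using that xab power_idempotent[OF p(3)] by simp
  then have "\<forall>n::nat. n \<ge> 1 \<longrightarrow> b * (x * a * b) ^ n = b \<and> ((x * a * b) ^ n)\<^sup>\<star> = (x * a * b) ^ n"
    using p(1,2) by simp
  then show ?thesis
    unfolding x_def by blast
qed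

lemma left_dual_bc_core_inverse_iff:
  "left_dual_bc_core_inverse a b c x \<longleftrightarrow>
    (\<exists>r. x = r * c) \<and> b * (x * a * b) = b \<and> (x * a * b)\<^sup>\<star> = x * a * b"
  by (simp add: left_dual_bc_core_inverse_def mult.assoc)

theorem theorem2p4:
  fixes a b c :: "'a::involution_ring"
  shows
   "(left_dual_bc_core_invertible a b c \<longleftrightarrow> (\<exists>r. b = b * (c * a * b)\<^sup>\<star> * r))
  \<and> ((\<exists>r. b = b * (c * a * b)\<^sup>\<star> * r) \<longleftrightarrow>
       ((\<exists>s. b = s * c * a * b) \<and> (\<exists>t. b = b * b\<^sup>\<star> * t)))
  \<and> (((\<exists>s. b = s * c * a * b) \<and> (\<exists>t. b = b * b\<^sup>\<star> * t)) \<longleftrightarrow>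
       (\<exists>x. (\<exists>r. x = r * c) \<and>
          (\<forall>n::nat. n \<ge> 1 \<longrightarrow> b * (x * a * b) ^ n = b \<and> ((x * a * b) ^ n)\<^sup>\<star> = (x * a * b) ^ n)))
  \<and> ((\<exists>x. (\<exists>r. x = r * c) \<and>
          (\<forall>n::nat. n \<ge> 1 \<longrightarrow> b * (x * a * b) ^ n = b \<and> ((x * a * b) ^ n)\<^sup>\<star> = (x * a * b) ^ n))
     \<longleftrightarrow>
      (\<exists>x. (\<exists>r. x = r * c) \<and>
          (\<exists>n::nat. n \<ge> 1 \<and> b * (x * a * b) ^ n = b \<and> ((x * a * b) ^ n)\<^sup>\<star> = (x * a * b) ^ n)))"
proof -
  let ?P1 = "left_dual_bc_core_invertible a b c"
  let ?P2 = "\<exists>r. b = b * (c * a * b)\<^sup>\<star> * r"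
  let ?P3 = "(\<exists>s. b = s * c * a * b) \<and> (\<exists>t. b = b * b\<^sup>\<star> * t)"
  let ?P4 = "\<exists>x. (\<exists>r. x = r * c) \<and>
    (\<forall>n::nat. n \<ge> 1 \<longrightarrow> b * (x * a * b) ^ n = b \<and> ((x * a * b) ^ n)\<^sup>\<star> = (x * a * b) ^ n)"
  let ?P5 = "\<exists>x. (\<exists>r. x = r * c) \<and>
    (\<exists>n::nat. n \<ge> 1 \<and> b * (x * a * b) ^ n = b \<and> ((x * a * b) ^ n)\<^sup>\<star> = (x * a * b) ^ n)"
  have "?P1 \<Longrightarrow> ?P5"
    unfolding left_dual_bc_core_invertible_def left_dual_bc_core_inverse_iff
    by (metis order_refl power_one_right)
  moreover have "?P5 \<Longrightarrow> ?P2"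
    by (elim exE conjE) (rule in_invol_right_ideal_if_power_core_condition)
  moreover have "?P2 \<Longrightarrow> ?P3"
    by (elim exE) (rule in_left_ideal_and_mult_invol_right_ideal_if_in_invol_right_ideal)
  moreover have "?P3 \<Longrightarrow> ?P4"
    by (elim exE conjE) (rule power_core_condition_if_in_left_ideal_and_mult_invol_right_ideal)
  moreover have "?P4 \<Longrightarrow> ?P1"
    unfolding left_dual_bc_core_invertible_def left_dual_bc_core_inverse_iff
    by (metis order_refl power_one_right)
  ultimately show ?thesis
    by blast
qed

end
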